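(* Let $\alpha\ge6$ and $f_\alpha(y)=\sum_{k,l\in\mathbb{Z}}e^{-\pi\alpha\phi_{k,l}(y)}$. Then the maximum of $f_\alpha$ over $[\sqrt3/2,\infty)$ is attained at some point $y\le\tfrac{\sqrt3}2+\tfrac1{3\sqrt\alpha}$.
   Context: For $y>0$ and $(k,l)\in\mathbb{Z}^2$: $\phi_{k,l}(y)=\frac{(2k+l+1)^2}{4y}+y\big(l+\frac12-\frac1{8y^2}\big)^2$. *)

theory Defs
  imports "HOL-Analysis.Analysis"
begin

definition phi :: "int \<Rightarrow> int \<Rightarrow> real \<Rightarrow> real" where
  "phi k l y = (2 * real_of_int k + real_of_int l + 1)^2 / (4 * y)
      + y * (real_of_int l + 1/2 - 1 / (8 * y^2))^2"

definition f_alpha :: "real \<Rightarrow> real \<Rightarrow> real" where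
  "f_alpha \<alpha> y = (\<Sum>\<^sub>\<infinity>(k,l)\<in>(UNIV :: (int \<times> int) set). exp (- pi * \<alpha> * phi k l y))"

end

theory Submission
  imports Defs
begin

text \<open>For \<open>y \<ge> \<surd>3/2\<close> the three lattice points \<open>(0,0), (-1,0), (0,-1)\<close> all give
  \<open>\<phi> = y/4 + 1/(8y) + 1/(64y\<^sup>3)\<close>, a function that increases on \<open>[\<surd>3/2, \<infinity>)\<close> and grows
  quadratically away from \<open>\<surd>3/2\<close>, while every other point has
  \<open>\<phi> \<ge> 7/10 + (|k| + |l|)/20\<close>. So the remaining terms of \<open>f\<^sub>\<alpha>\<close> are dominated by a
  geometric series that is negligible for \<open>\<alpha> \<ge> 6\<close>, and beyond
  \<open>y\<^sub>1 = \<surd>3/2 + 1/(3\<surd>\<alpha>)\<close> the three main terms have lost at least a factor \<open>exp (-\<pi>/30)\<close>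
  relative to \<open>y = \<surd>3/2\<close>, which outweighs the whole tail. Hence \<open>f\<^sub>\<alpha>(y) \<le> f\<^sub>\<alpha>(\<surd>3/2)\<close>
  for \<open>y \<ge> y\<^sub>1\<close>, and the maximum of the continuous \<open>f\<^sub>\<alpha>\<close> on the compact interval
  \<open>[\<surd>3/2, y\<^sub>1]\<close> is a global maximum.\<close>

lemma sqrt3_bounds: "433/250 \<le> sqrt 3" "sqrt 3 \<le> 17321/10000"
  by (rule real_le_rsqrt real_le_lsqrt; simp add: power_divide)+

lemma abs_mult_le_sq_div_add:
  fixes m t y :: real
  assumes "y > 0"
  shows "\<bar>m\<bar> * \<bar>t\<bar> \<le> m^2/(4*y) + y*t^2"
proof -
  have "0 \<le> (\<bar>m\<bar> - 2*y*\<bar>t\<bar>)^2/(4*y)" using assms by simp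
  also have "\<dots> = m^2/(4*y) + y*t^2 - \<bar>m\<bar> * \<bar>t\<bar>"
    using assms by (simp add: field_simps power2_eq_square abs_mult_self_eq)
  finally show ?thesis by simp
qed

lemma pos_of_ge_sqrt3_half: "sqrt 3/2 \<le> y \<Longrightarrow> 0 < (y::real)"
  using real_sqrt_gt_zero[of 3] by linarith

lemma inverse_8_sq_bounds:
  assumes "sqrt 3/2 \<le> y"
  shows "0 < 1/(8*y^2)" "1/(8*y^2) \<le> 1/6"
proof -
  have "(sqrt 3/2)^2 \<le> y^2" using assms by (intro power_mono) auto
  then have "3/4 \<le> y^2" by (simp add: power_divide)
  moreover have "0 < y" using assms by (rule pos_of_ge_sqrt3_half)
  ultimately show "0 < 1/(8*y^2)" "1/(8*y^2) \<le> 1/6" by (simp_all add: divide_simps)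
qed

lemma phi_lower_bounds:
  fixes k l :: int and y :: real
  assumes y: "sqrt 3/2 \<le> y"
  defines "t \<equiv> real_of_int l + 1/2 - 1/(8*y^2)"
  shows "\<bar>2 * real_of_int k + real_of_int l + 1\<bar> * \<bar>t\<bar> \<le> phi k l y"
    and "433/500 * t^2 \<le> phi k l y"
proof -
  define m where "m = 2 * real_of_int k + real_of_int l + 1"
  have y_ge: "433/500 \<le> y" using y sqrt3_bounds by linarith
  have phi_eq: "phi k l y = m^2/(4*y) + y*t^2" by (simp add: phi_def m_def t_def)
  show "\<bar>2 * real_of_int k + real_of_int l + 1\<bar> * \<bar>t\<bar> \<le> phi k l y"
    unfolding phi_eq m_def[symmetric] using y_ge by (intro abs_mult_le_sq_div_add) simp
  have "433/500 * t^2 \<le> y * t^2" using y_ge by (intro mult_right_mono) auto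
  moreover have "0 \<le> m^2/(4*y)" using y_ge by simp
  ultimately show "433/500 * t^2 \<le> phi k l y" unfolding phi_eq by linarith
qed

definition main_indices :: "(int \<times> int) set" where
  "main_indices = {(0,0), (-1,0), (0,-1)}"

lemma phi_ge_one:
  assumes y: "sqrt 3/2 \<le> y" and kl: "(k,l) \<notin> main_indices"
  shows "1 \<le> phi k l y"
proof -
  define u where "u = 1/(8*y^2)"
  define m where "m = 2 * real_of_int k + real_of_int l + 1"
  define t where "t = real_of_int l + 1/2 - u"
  have u: "0 < u" "u \<le> 1/6" using inverse_8_sq_bounds[OF y] by (simp_all add: u_def)
  have amgm: "\<bar>m\<bar> * \<bar>t\<bar> \<le> phi k l y" and yt: "433/500 * t^2 \<le> phi k l y"
    using phi_lower_bounds[OF y, where k=k and l=l] by (simp_all add: m_def t_def u_def)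
  consider "l \<ge> 1" | "l \<le> -2" | "l = 0" | "l = -1" by linarith
  then show ?thesis
  proof cases
    case 1
    then have "4/3 \<le> t" using u by (simp add: t_def)
    then have "(4/3)^2 \<le> t^2" by (intro power_mono) auto
    with yt show ?thesis by (simp add: power_divide)
  next
    case 2
    then have "3/2 \<le> \<bar>t\<bar>" using u by (simp add: t_def)
    then have "(3/2)^2 \<le> \<bar>t\<bar>^2" by (intro power_mono) auto
    with yt show ?thesis by (simp add: power_divide)
  next
    case 3
    with kl have "k \<noteq> 0" "k \<noteq> -1" by (auto simp: main_indices_def)
    with 3 have "3 \<le> \<bar>m\<bar>" unfolding m_def by linarith
    moreover have "1/3 \<le> \<bar>t\<bar>" using 3 u by (simp add: t_def)
    ultimately have "3 * (1/3) \<le> \<bar>m\<bar> * \<bar>t\<bar>" by (intro mult_mono) auto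
    with amgm show ?thesis by simp
  next
    case 4
    with kl have "k \<noteq> 0" by (auto simp: main_indices_def)
    with 4 have "2 \<le> \<bar>m\<bar>" unfolding m_def by linarith
    moreover have "1/2 \<le> \<bar>t\<bar>" using 4 u by (simp add: t_def)
    ultimately have "2 * (1/2) \<le> \<bar>m\<bar> * \<bar>t\<bar>" by (intro mult_mono) auto
    with amgm show ?thesis by simp
  qed
qed

lemma phi_nonmain_lower:
  assumes y: "sqrt 3/2 \<le> y" and kl: "(k,l) \<notin> main_indices"
  shows "7/10 + (\<bar>real_of_int k\<bar> + \<bar>real_of_int l\<bar>)/20 \<le> phi k l y"
proof -
  define u where "u = 1/(8*y^2)"
  define m where "m = 2 * real_of_int k + real_of_int l + 1"
  define t where "t = real_of_int l + 1/2 - u"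
  have u: "0 < u" "u \<le> 1/6" using inverse_8_sq_bounds[OF y] by (simp_all add: u_def)
  have amgm: "\<bar>m\<bar> * \<bar>t\<bar> \<le> phi k l y" and yt: "433/500 * t^2 \<le> phi k l y"
    using phi_lower_bounds[OF y, where k=k and l=l] by (simp_all add: m_def t_def u_def)
  have "0 \<le> real_of_int l \<or> real_of_int l \<le> -1" by (cases "l \<ge> 0") auto
  then have t_ge: "1/3 \<le> \<bar>t\<bar>" "\<bar>real_of_int l\<bar> - 1/2 \<le> \<bar>t\<bar>"
    using u unfolding t_def by arith+
  have "\<bar>m\<bar>/3 \<le> \<bar>m\<bar> * \<bar>t\<bar>" using mult_left_mono[OF t_ge(1), of "\<bar>m\<bar>"] by simp
  with amgm have m_bound: "\<bar>m\<bar>/3 \<le> phi k l y" by linarith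
  have "\<bar>real_of_int l\<bar> - 3/4 \<le> t^2"
  proof (cases "l = 0")
    case False
    then have "(\<bar>real_of_int l\<bar> - 1/2)^2 \<le> \<bar>t\<bar>^2" using t_ge(2) by (intro power_mono) auto
    moreover have "0 \<le> (\<bar>real_of_int l\<bar> - 1)^2" by simp
    ultimately show ?thesis by (simp add: power2_eq_square algebra_simps)
  qed (simp add: order_trans[OF _ zero_le_power2])
  with yt have l_bound: "433/500 * (\<bar>real_of_int l\<bar> - 3/4) \<le> phi k l y" by simp
  have "2 * \<bar>real_of_int k\<bar> - \<bar>real_of_int l\<bar> - 1 \<le> \<bar>m\<bar>" unfolding m_def by linarith
  with m_bound l_bound phi_ge_one[OF y kl] show ?thesis by (simp add: field_simps)
qed

definition phi_main :: "real \<Rightarrow> real" where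
  "phi_main y = y/4 + 1/(8*y) + 1/(64*y^3)"

lemma phi_main_indices:
  assumes "y > 0" and "(k,l) \<in> main_indices"
  shows "phi k l y = phi_main y"
  using assms by (auto simp: main_indices_def phi_def phi_main_def field_simps power2_eq_square power3_eq_cube)

lemma phi_main_mono:
  assumes z: "sqrt 3/2 \<le> z" and "z \<le> y"
  shows "phi_main z \<le> phi_main y"
proof (rule DERIV_nonneg_imp_nondecreasing[OF \<open>z \<le> y\<close>])
  fix x assume "z \<le> x"
  with z have "sqrt 3/2 \<le> x" by simp
  then have "0 < x" by (rule pos_of_ge_sqrt3_half)
  show "\<exists>d. (phi_main has_real_derivative d) (at x) \<and> 0 \<le> d"
  proof (intro exI conjI)
    show "(phi_main has_real_derivative 1/4 - 1/(8*x^2) - 3/(64*x^4)) (at x)"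
      unfolding phi_main_def using \<open>0 < x\<close>
      by (auto intro!: derivative_eq_intros simp: field_simps power2_eq_square power3_eq_cube power4_eq_xxxx)
    define v where "v = 1/(8*x^2)"
    have v: "0 < v" "v \<le> 1/6" using inverse_8_sq_bounds[OF \<open>sqrt 3/2 \<le> x\<close>] by (simp_all add: v_def)
    have "3/(64*x^4) = 3 * v^2" by (simp add: v_def power_divide power_mult_distrib flip: power_mult)
    moreover have "v^2 \<le> (1/6)^2" using v by (intro power_mono) auto
    ultimately show "0 \<le> 1/4 - 1/(8*x^2) - 3/(64*x^4)" using v by (simp add: v_def[symmetric] power_divide)
  qed
qed

lemma phi_main_base: "phi_main (sqrt 3/2) = 2 * sqrt 3 / 9"
proof -
  have "sqrt 3 ^ 3 = 3 * sqrt 3" by (simp add: power3_eq_cube)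
  then show ?thesis by (simp add: phi_main_def field_simps power3_eq_cube)
qed

lemma phi_main_sub_base:
  assumes "y > 0"
  shows "phi_main y - phi_main (sqrt 3/2) = (2*y - sqrt 3)^2 * (36*y^2 + 4 * sqrt 3 * y + 3) / (576*y^3)"
proof -
  define r where "r = sqrt 3"
  have r: "r^2 = 3" by (simp add: r_def)
  have "(2*y - r)^2 * (36*y^2 + 4 * r * y + 3) =
      144*y^4 - 128*r*y^3 + (12 + 20*r^2)*y^2 + (4*r*r^2 - 12*r)*y + 3*r^2"
    by (simp add: power2_eq_square power3_eq_cube power4_eq_xxxx algebra_simps)
  also have "\<dots> = 9 * (16*y^4 + 8*y^2 + 1) - 128 * r * y^3" using r by simp
  finally have "9 * (16*y^4 + 8*y^2 + 1) - 128 * r * y^3 = (2*y - r)^2 * (36*y^2 + 4 * r * y + 3)" ..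
  moreover have "phi_main y - 2 * r / 9 = (9 * (16*y^4 + 8*y^2 + 1) - 128 * r * y^3) / (576*y^3)"
    using assms by (simp add: phi_main_def field_simps power2_eq_square power3_eq_cube power4_eq_xxxx)
  ultimately show ?thesis by (simp add: phi_main_base r_def)
qed

lemma phi_main_growth:
  assumes y: "sqrt 3/2 \<le> y" "y \<le> 101/100"
  shows "3/10 * (y - sqrt 3/2)^2 \<le> phi_main y - phi_main (sqrt 3/2)"
proof -
  have y_ge: "433/500 \<le> y" using y sqrt3_bounds by linarith
  have "y^2 \<le> 101/100 * y" "y^3 \<le> 101/100 * y^2"
    using y y_ge by (simp_all add: power2_eq_square power3_eq_cube mult_right_mono)
  moreover have "433/250 * y \<le> sqrt 3 * y" using sqrt3_bounds y_ge by (intro mult_right_mono) auto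
  ultimately have "3/10 * (576 * y^3) \<le> 4 * (36*y^2 + 4 * sqrt 3 * y + 3)"
    unfolding mult.assoc using y_ge y by argo
  then have "3/10 * (576 * y^3) * (2*y - sqrt 3)^2 \<le> 4 * (36*y^2 + 4 * sqrt 3 * y + 3) * (2*y - sqrt 3)^2"
    by (rule mult_right_mono) simp
  moreover have "(2*y - sqrt 3)^2 = 4 * (y - sqrt 3/2)^2" by (simp add: power2_eq_square algebra_simps)
  moreover have "0 < y^3" using y_ge by simp
  ultimately show ?thesis using y_ge by (simp add: phi_main_sub_base field_simps)
qed

lemma sum_power_inj_le:
  fixes q :: real
  assumes "inj_on h K" "finite K" "0 \<le> q" "q < 1"
  shows "(\<Sum>k\<in>K. q ^ h k) \<le> 1/(1-q)"
proof -
  have "(\<Sum>k\<in>K. q ^ h k) = (\<Sum>n\<in>h ` K. q ^ n)" using assms(1) by (simp add: sum.reindex)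
  also have "\<dots> \<le> (\<Sum>n. q ^ n)" using assms by (intro sum_le_suminf) auto
  also have "\<dots> = 1/(1-q)" using assms by (intro suminf_geometric) auto
  finally show ?thesis .
qed

lemma sum_power_nat_abs_le:
  fixes q :: real
  assumes "finite K" "0 \<le> q" "q < 1"
  shows "(\<Sum>k\<in>K. q ^ nat \<bar>k\<bar>) \<le> 2/(1-q)"
proof -
  have "(\<Sum>k\<in>K. q ^ nat \<bar>k\<bar>) \<le> (\<Sum>k\<in>K \<inter> {0..} \<union> K \<inter> {..0}. q ^ nat \<bar>k\<bar>)"
    using assms by (intro sum_mono2) auto
  also have "\<dots> \<le> (\<Sum>k\<in>K \<inter> {0..}. q ^ nat \<bar>k\<bar>) + (\<Sum>k\<in>K \<inter> {..0}. q ^ nat \<bar>k\<bar>)"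
    using assms by (simp add: sum_Un sum_nonneg)
  also have "\<dots> \<le> 1/(1-q) + 1/(1-q)"
    using assms by (intro add_mono sum_power_inj_le) (auto simp: inj_on_def)
  finally show ?thesis by simp
qed

definition lattice_weight :: "real \<Rightarrow> int \<times> int \<Rightarrow> real" where
  "lattice_weight q x = q ^ (nat \<bar>fst x\<bar> + nat \<bar>snd x\<bar>)"

lemma sum_lattice_weight_le:
  assumes "finite F" "0 \<le> q" "q < 1"
  shows "sum (lattice_weight q) F \<le> (2/(1-q))^2"
proof -
  have "sum (lattice_weight q) F \<le> sum (lattice_weight q) (fst ` F \<times> snd ` F)"
    using assms by (intro sum_mono2) (force simp: lattice_weight_def)+
  also have "\<dots> = (\<Sum>k\<in>fst ` F. q ^ nat \<bar>k\<bar>) * (\<Sum>l\<in>snd ` F. q ^ nat \<bar>l\<bar>)"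
    by (simp add: lattice_weight_def sum_product sum.cartesian_product power_add case_prod_beta)
  also have "\<dots> \<le> (2/(1-q)) * (2/(1-q))"
    using assms by (intro mult_mono sum_power_nat_abs_le sum_nonneg) auto
  finally show ?thesis by (simp add: power2_eq_square)
qed

lemma lattice_weight_summable:
  assumes "0 \<le> q" "q < 1"
  shows "lattice_weight q summable_on UNIV"
proof (rule nonneg_bdd_above_summable_on)
  show "bdd_above (sum (lattice_weight q) ` {F. F \<subseteq> UNIV \<and> finite F})"
    using assms sum_lattice_weight_le by (intro bdd_aboveI2) auto
qed (use assms in \<open>simp add: lattice_weight_def\<close>)

lemma infsum_lattice_weight_le:
  assumes "0 \<le> q" "q < 1"
  shows "infsum (lattice_weight q) UNIV \<le> (2/(1-q))^2"
  using assms by (intro infsum_le_finite_sums lattice_weight_summable sum_lattice_weight_le)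

definition theta_term :: "real \<Rightarrow> real \<Rightarrow> int \<times> int \<Rightarrow> real" where
  "theta_term \<alpha> y x = exp (- pi * \<alpha> * phi (fst x) (snd x) y)"

lemma f_alpha_eq_infsum_theta_term: "f_alpha \<alpha> y = infsum (theta_term \<alpha> y) UNIV"
  unfolding f_alpha_def theta_term_def[abs_def] by (simp add: case_prod_unfold)

lemma lattice_weight_exp: "lattice_weight (exp a) x = exp (a * (\<bar>real_of_int (fst x)\<bar> + \<bar>real_of_int (snd x)\<bar>))"
  by (simp add: lattice_weight_def flip: exp_of_nat_mult)

lemma theta_term_nonmain_le:
  assumes "0 \<le> \<alpha>" "sqrt 3/2 \<le> y" "x \<notin> main_indices"
  shows "theta_term \<alpha> y x \<le> exp (- 7/10 * pi * \<alpha>) * lattice_weight (exp (- pi * \<alpha> / 20)) x"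
proof -
  have "pi * \<alpha> * (7/10 + (\<bar>real_of_int (fst x)\<bar> + \<bar>real_of_int (snd x)\<bar>)/20) \<le> pi * \<alpha> * phi (fst x) (snd x) y"
    using assms phi_nonmain_lower[of y "fst x" "snd x"] by (intro mult_left_mono) auto
  moreover have "exp (- 7/10 * pi * \<alpha>) * lattice_weight (exp (- pi * \<alpha> / 20)) x =
      exp (- (pi * \<alpha> * (7/10 + (\<bar>real_of_int (fst x)\<bar> + \<bar>real_of_int (snd x)\<bar>)/20)))"
    by (simp add: lattice_weight_exp algebra_simps flip: exp_add)
  ultimately show ?thesis by (simp add: theta_term_def)
qed

lemma theta_term_le:
  assumes "0 \<le> \<alpha>" "sqrt 3/2 \<le> y"
  shows "theta_term \<alpha> y x \<le> exp (pi * \<alpha> / 20) * lattice_weight (exp (- pi * \<alpha> / 20)) x"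
proof (cases "x \<in> main_indices")
  case True
  have "0 < y" using assms(2) by (rule pos_of_ge_sqrt3_half)
  then have "0 \<le> phi (fst x) (snd x) y"
    using True phi_main_indices[of y "fst x" "snd x"] by (simp add: phi_main_def)
  then have "theta_term \<alpha> y x \<le> 1" using assms(1) by (simp add: theta_term_def)
  also have "1 \<le> exp (pi * \<alpha> / 20) * lattice_weight (exp (- pi * \<alpha> / 20)) x"
    using True assms(1) by (auto simp: main_indices_def lattice_weight_exp simp flip: exp_add)
  finally show ?thesis .
next
  case False
  have "theta_term \<alpha> y x \<le> exp (- 7/10 * pi * \<alpha>) * lattice_weight (exp (- pi * \<alpha> / 20)) x"
    using assms False by (rule theta_term_nonmain_le)
  also have "\<dots> \<le> exp (pi * \<alpha> / 20) * lattice_weight (exp (- pi * \<alpha> / 20)) x"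
    using assms(1) by (intro mult_right_mono) (auto simp: lattice_weight_def)
  finally show ?thesis .
qed

lemma theta_term_nonneg: "0 \<le> theta_term \<alpha> y x"
  by (simp add: theta_term_def)

lemma theta_term_summable:
  assumes "0 < \<alpha>" "sqrt 3/2 \<le> y"
  shows "theta_term \<alpha> y summable_on A"
proof -
  have "lattice_weight (exp (- pi * \<alpha> / 20)) summable_on UNIV"
    using assms(1) by (intro lattice_weight_summable) auto
  then have "(\<lambda>x. exp (pi * \<alpha> / 20) * lattice_weight (exp (- pi * \<alpha> / 20)) x) summable_on UNIV"
    by (rule summable_on_cmult_right)
  then have "theta_term \<alpha> y summable_on UNIV"
    by (rule summable_on_comparison_test) (use assms theta_term_le theta_term_nonneg in auto)
  then show ?thesis by (rule summable_on_subset_banach) simp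
qed

lemma f_alpha_continuous_on:
  assumes "0 < \<alpha>"
  shows "continuous_on {sqrt 3/2..} (f_alpha \<alpha>)"
proof -
  define w where "w x = exp (pi * \<alpha> / 20) * lattice_weight (exp (- pi * \<alpha> / 20)) x" for x
  have "w summable_on UNIV"
    unfolding w_def using assms by (intro summable_on_cmult_right lattice_weight_summable) auto
  moreover have "norm (theta_term \<alpha> y x) \<le> w x" if "y \<in> {sqrt 3/2..}" for x y
    using assms that theta_term_le[of \<alpha> y x] by (simp add: w_def theta_term_def)
  ultimately have "uniform_limit {sqrt 3/2..} (\<lambda>X y. \<Sum>x\<in>X. theta_term \<alpha> y x)
      (\<lambda>y. infsum (theta_term \<alpha> y) UNIV) (finite_subsets_at_top UNIV)"
    using Weierstrass_m_test_general[of UNIV "{sqrt 3/2..}" "\<lambda>x y. theta_term \<alpha> y x" w] by simp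
  moreover have "continuous_on {sqrt 3/2..} (\<lambda>y. theta_term \<alpha> y x)" for x
  proof -
    have "\<forall>y\<in>{sqrt 3/2..}. y \<noteq> 0" using pos_of_ge_sqrt3_half by force
    then show ?thesis unfolding theta_term_def phi_def by (intro continuous_intros) auto
  qed
  then have "\<forall>\<^sub>F X in finite_subsets_at_top UNIV.
      continuous_on {sqrt 3/2..} (\<lambda>y. \<Sum>x\<in>X. theta_term \<alpha> y x)"
    by (intro always_eventually allI continuous_on_sum) auto
  ultimately have "continuous_on {sqrt 3/2..} (\<lambda>y. infsum (theta_term \<alpha> y) UNIV)"
    by (intro uniform_limit_theorem) auto
  then show ?thesis by (simp add: f_alpha_eq_infsum_theta_term[abs_def])
qed

lemma infsum_theta_term_main_indices:
  assumes "0 < y"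
  shows "infsum (theta_term \<alpha> y) main_indices = 3 * exp (- pi * \<alpha> * phi_main y)"
  using assms by (simp add: main_indices_def theta_term_def phi_main_indices[unfolded main_indices_def])

lemma f_alpha_ge_main:
  assumes "0 < \<alpha>" "sqrt 3/2 \<le> y"
  shows "3 * exp (- pi * \<alpha> * phi_main y) \<le> f_alpha \<alpha> y"
proof -
  have "infsum (theta_term \<alpha> y) main_indices \<le> infsum (theta_term \<alpha> y) UNIV"
    using assms theta_term_summable theta_term_nonneg by (intro infsum_mono2) auto
  then show ?thesis
    using assms pos_of_ge_sqrt3_half by (simp add: f_alpha_eq_infsum_theta_term infsum_theta_term_main_indices)
qed

lemma f_alpha_le_main:
  assumes "0 < \<alpha>" "sqrt 3/2 \<le> y"
  shows "f_alpha \<alpha> y \<le> 3 * exp (- pi * \<alpha> * phi_main y)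
    + exp (- 7/10 * pi * \<alpha>) * (2 / (1 - exp (- pi * \<alpha> / 20)))^2"
proof -
  define q where "q = exp (- pi * \<alpha> / 20)"
  have q: "0 \<le> q" "q < 1" using assms(1) by (simp_all add: q_def)
  have w: "lattice_weight q summable_on A" for A
    using lattice_weight_summable[OF q] by (rule summable_on_subset_banach) simp
  have "infsum (theta_term \<alpha> y) (- main_indices)
      \<le> infsum (\<lambda>x. exp (- 7/10 * pi * \<alpha>) * lattice_weight q x) (- main_indices)"
    using assms theta_term_nonmain_le theta_term_summable
    by (intro infsum_mono summable_on_cmult_right w) (auto simp: q_def)
  also have "\<dots> = exp (- 7/10 * pi * \<alpha>) * infsum (lattice_weight q) (- main_indices)"
    by (rule infsum_cmult_right) (rule w)
  also have "\<dots> \<le> exp (- 7/10 * pi * \<alpha>) * infsum (lattice_weight q) UNIV"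
    using w by (intro mult_left_mono infsum_mono2) (auto simp: lattice_weight_def q_def)
  also have "\<dots> \<le> exp (- 7/10 * pi * \<alpha>) * (2 / (1 - q))^2"
    using q by (intro mult_left_mono infsum_lattice_weight_le) auto
  finally have tail: "infsum (theta_term \<alpha> y) (- main_indices) \<le> exp (- 7/10 * pi * \<alpha>) * (2 / (1 - q))^2" .
  have "infsum (theta_term \<alpha> y) (main_indices \<union> - main_indices) =
      infsum (theta_term \<alpha> y) main_indices + infsum (theta_term \<alpha> y) (- main_indices)"
    using assms theta_term_summable by (intro infsum_Un_disjoint) auto
  then show ?thesis
    using tail assms pos_of_ge_sqrt3_half
    by (simp add: f_alpha_eq_infsum_theta_term infsum_theta_term_main_indices q_def)
qed

lemma theta_tail_numeric:
  fixes c :: real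
  assumes "18 \<le> c"
  shows "3 * exp (- 1/10) + exp (- 63/200 * c) * (2 / (1 - exp (- c/20)))^2 \<le> 3"
proof -
  define q where "q = exp (- c/20)"
  define r where "r = exp (- 63/200 * c)"
  have "11/10 \<le> exp (1/10::real)" using exp_ge_add_one_self[of "1/10::real"] by simp
  then have e1: "exp (- 1/10::real) \<le> 10/11" by (simp add: exp_minus field_simps)
  have "9/4 \<le> exp (9/10::real)" using exp_lower_Taylor_quadratic[of "9/10::real"] by (simp add: power2_eq_square)
  then have "exp (- 9/10::real) \<le> 4/9" by (simp add: exp_minus field_simps)
  moreover have "q \<le> exp (- 9/10)" using assms by (simp add: q_def)
  ultimately have "q \<le> 4/9" by linarith
  then have "2 / (1 - q) \<le> 18/5" "0 \<le> 2 / (1 - q)" by (simp_all add: pos_divide_le_eq)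
  then have e2: "(2 / (1 - q))^2 \<le> (18/5)^2" by (intro power_mono)
  have "(1 + (567/100) / real 8) ^ 8 \<le> exp (567/100::real)"
    by (intro exp_ge_one_plus_x_over_n_power_n) auto
  moreover have "70 \<le> (1 + (567/100) / real 8) ^ 8" by (simp add: power_divide)
  ultimately have "70 \<le> exp (567/100::real)" by linarith
  then have "exp (- 567/100::real) \<le> 1/70" by (simp add: exp_minus field_simps)
  moreover have "r \<le> exp (- 567/100)" using assms by (simp add: r_def)
  ultimately have e3: "r \<le> 1/70" by linarith
  have "r * (2 / (1 - q))^2 \<le> 1/70 * (18/5)^2"
    using e2 e3 by (intro mult_mono) (auto simp: r_def)
  then show ?thesis using e1 unfolding q_def[symmetric] r_def[symmetric] by (simp add: power2_eq_square)
qed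

lemma f_alpha_le_base:
  assumes \<alpha>: "6 \<le> \<alpha>" and y: "sqrt 3/2 + 1/(3 * sqrt \<alpha>) \<le> y"
  shows "f_alpha \<alpha> y \<le> f_alpha \<alpha> (sqrt 3/2)"
proof -
  define c where "c = pi * \<alpha>"
  define y0 where "y0 = sqrt 3/2"
  define \<delta> where "\<delta> = 1/(3 * sqrt \<alpha>)"
  define S where "S = (2 / (1 - exp (- c/20)))^2"
  have "3 * 6 \<le> pi * \<alpha>" using pi_gt3 \<alpha> by (intro mult_mono) auto
  then have c: "18 \<le> c" by (simp add: c_def)
  have \<delta>: "0 < \<delta>" "c * (3/10 * \<delta>^2) = pi/30"
    using \<alpha> by (simp_all add: \<delta>_def c_def power_divide power_mult_distrib)
  have "2449/1000 \<le> sqrt 6" by (rule real_le_rsqrt) (simp add: power_divide)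
  also have "sqrt 6 \<le> sqrt \<alpha>" using \<alpha> by simp
  finally have "\<delta> \<le> 1362/10000" using \<alpha> by (simp add: \<delta>_def divide_simps)
  then have "y0 + \<delta> \<le> 101/100" using sqrt3_bounds by (simp add: y0_def)
  then have "3/10 * \<delta>^2 \<le> phi_main (y0 + \<delta>) - phi_main y0"
    using phi_main_growth[of "y0 + \<delta>"] \<delta> by (simp add: y0_def)
  moreover have "phi_main (y0 + \<delta>) \<le> phi_main y"
    using phi_main_mono[of "y0 + \<delta>" y] y \<delta> by (simp add: y0_def \<delta>_def)
  ultimately have "3/10 * \<delta>^2 \<le> phi_main y - phi_main y0" by linarith
  then have "c * (3/10 * \<delta>^2) \<le> c * (phi_main y - phi_main y0)" using c by (intro mult_left_mono) auto
  then have gap: "c * phi_main y0 + 1/10 \<le> c * phi_main y" using \<delta>(2) pi_gt3 by (simp add: algebra_simps)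
  have "phi_main y0 \<le> 385/1000" using phi_main_base sqrt3_bounds by (simp add: y0_def)
  then have "c * phi_main y0 \<le> c * (385/1000)" using c by (intro mult_left_mono) auto
  then have tail: "c * phi_main y0 + 63/200 * c \<le> 7/10 * c" by simp
  have y0_le: "y0 \<le> y" using y \<delta>(1) unfolding y0_def \<delta>_def by linarith
  have "f_alpha \<alpha> y \<le> 3 * exp (- c * phi_main y) + exp (- 7/10 * c) * S"
    using f_alpha_le_main[of \<alpha> y] \<alpha> y0_le by (simp add: c_def S_def y0_def mult.assoc)
  also have "\<dots> \<le> 3 * exp (- c * phi_main y0 - 1/10) + exp (- c * phi_main y0 - 63/200 * c) * S"
    using gap tail by (intro add_mono mult_right_mono) (auto simp: S_def)
  also have "\<dots> = exp (- c * phi_main y0) * (3 * exp (- 1/10) + exp (- 63/200 * c) * S)"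
    by (simp add: ring_distribs mult.left_commute flip: exp_add)
  also have "\<dots> \<le> exp (- c * phi_main y0) * 3"
    using theta_tail_numeric[OF c] by (intro mult_left_mono) (auto simp: S_def)
  also have "\<dots> \<le> f_alpha \<alpha> y0"
    using f_alpha_ge_main[of \<alpha> y0] \<alpha> by (simp add: c_def y0_def)
  finally show ?thesis by (simp add: y0_def)
qed

theorem mainTheorem17:
  fixes \<alpha> :: real
  assumes "\<alpha> \<ge> 6"
  shows "\<exists>y0. sqrt 3 / 2 \<le> y0 \<and> y0 \<le> sqrt 3 / 2 + 1 / (3 * sqrt \<alpha>) \<and>
           (\<forall>y. sqrt 3 / 2 \<le> y \<longrightarrow> f_alpha \<alpha> y \<le> f_alpha \<alpha> y0)"
proof -
  define y1 where "y1 = sqrt 3 / 2 + 1 / (3 * sqrt \<alpha>)"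
  have "sqrt 3 / 2 \<le> y1" using assms by (simp add: y1_def)
  moreover have "continuous_on {sqrt 3 / 2..y1} (f_alpha \<alpha>)"
    using assms by (intro continuous_on_subset[OF f_alpha_continuous_on]) auto
  ultimately obtain ym where ym: "ym \<in> {sqrt 3 / 2..y1}"
    and max: "\<And>y. y \<in> {sqrt 3 / 2..y1} \<Longrightarrow> f_alpha \<alpha> y \<le> f_alpha \<alpha> ym"
    using continuous_attains_sup[of "{sqrt 3 / 2..y1}" "f_alpha \<alpha>"] by auto
  have "f_alpha \<alpha> y \<le> f_alpha \<alpha> ym" if "sqrt 3 / 2 \<le> y" for y
  proof (cases "y \<le> y1")
    case True
    with that show ?thesis by (intro max) auto
  next
    case False
    then have "f_alpha \<alpha> y \<le> f_alpha \<alpha> (sqrt 3 / 2)"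
      using assms by (intro f_alpha_le_base) (auto simp: y1_def)
    also have "\<dots> \<le> f_alpha \<alpha> ym" using \<open>sqrt 3 / 2 \<le> y1\<close> by (intro max) auto
    finally show ?thesis .
  qed
  with ym show ?thesis unfolding y1_def by auto
qed

end
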